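(* Let $X$ be a positive random variable with law $\mathbb{P}$. Suppose 1. there exist $\sigma\in(0,1]$ and $C_\sigma<\infty$ such that $\mathbb{P}(X\in I)\le C_\sigma|I|^\sigma$ for all Borel sets $I\subset[0,\infty)$ with Lebesgue measure $|I|\le1$; 2. there exists $\tau>0$ with $\mathbb{E}[X^\tau]<\infty$. Then for all $\alpha\in(0,1/2)$, $$\delta(X,\alpha)\ge\min\Big\{1,\Big(\frac{1-2\alpha}{C_\sigma}\Big)^{1/\sigma}\Big\}\Big(\frac{\alpha}{\mathbb{E}[X^\tau]}\Big)^{1/\tau}.$$
   Context: For $\alpha\in(0,1/2]$ the relative $\alpha$-width of a positive random variable $X$ is $\delta(X,\alpha):=1-\xi_-(X,\alpha)/\xi_+(X,\alpha)$, where $\xi_-(X,\alpha):=\sup\{\xi:\mathbb{P}(X<\xi)\le\alpha\}$ and $\xi_+(X,\alpha):=\inf\{\xi:\mathbb{P}(X>\xi)\le\alpha\}$. *)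

theory Defs
  imports "HOL-Probability.Probability"
begin

definition xi_minus :: "'a measure \<Rightarrow> ('a \<Rightarrow> real) \<Rightarrow> real \<Rightarrow> real" where
  "xi_minus M X \<alpha> = Sup {\<xi>. measure M {\<omega> \<in> space M. X \<omega> < \<xi>} \<le> \<alpha>}"

definition xi_plus :: "'a measure \<Rightarrow> ('a \<Rightarrow> real) \<Rightarrow> real \<Rightarrow> real" where
  "xi_plus M X \<alpha> = Inf {\<xi>. measure M {\<omega> \<in> space M. X \<omega> > \<xi>} \<le> \<alpha>}"

definition rel_width :: "'a measure \<Rightarrow> ('a \<Rightarrow> real) \<Rightarrow> real \<Rightarrow> real" where
  "rel_width M X \<alpha> = 1 - xi_minus M X \<alpha> / xi_plus M X \<alpha>"

end

theory Submission
  imports Defs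
begin

text \<open>
  The mass at least 1 - 2\<alpha> that X puts between any level a with P(X < a) \<le> \<alpha> and any
  level b with P(X > b) \<le> \<alpha> forces, by the anti-concentration bound, b - a to be at least
  min 1 (((1 - 2\<alpha>)/C) powr (1/\<sigma>)); hence so is xi_plus - xi_minus. Since X > 0 we have
  xi_minus \<ge> 0, and Markov's inequality for X powr \<tau> gives xi_plus \<le> (E[X powr \<tau>]/\<alpha>) powr (1/\<tau>).
  Dividing the gap by this upper bound for xi_plus bounds the relative width from below.
\<close>

lemma gap_le_cInf_minus_cSup:
  fixes A B :: "real set" and d :: real
  assumes "A \<noteq> {}" and "B \<noteq> {}" and "\<And>a b. a \<in> A \<Longrightarrow> b \<in> B \<Longrightarrow> d \<le> b - a"
  shows "d \<le> Inf B - Sup A"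
proof -
  have "Sup A \<le> b - d" if "b \<in> B" for b
    using assms that by (intro cSup_least) force+
  then have "Sup A + d \<le> Inf B"
    using assms(2) by (intro cInf_greatest) force+
  then show ?thesis by simp
qed

lemma relative_gap_lower_bound:
  fixes lo hi m t :: real
  assumes "0 \<le> lo" and "m \<le> hi - lo" and "hi \<le> t" and "0 \<le> m" and "0 < t"
  shows "m / t \<le> 1 - lo / hi"
proof (cases "hi = 0")
  case True
  then show ?thesis using assms by simp
next
  case False
  then have "0 < hi" using assms by linarith
  have "m / t \<le> m / hi" using assms \<open>0 < hi\<close> by (intro divide_left_mono) auto
  also have "\<dots> \<le> (hi - lo) / hi" using assms \<open>0 < hi\<close> by (intro divide_right_mono) auto
  also have "\<dots> = 1 - lo / hi" using \<open>0 < hi\<close> by (simp add: field_simps)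
  finally show ?thesis .
qed

lemma (in finite_measure) measure_upper_tail_le_moment:
  fixes X :: "'a \<Rightarrow> real"
  assumes [measurable]: "X \<in> borel_measurable M"
    and "integrable M (\<lambda>\<omega>. X \<omega> powr \<tau>)" and "0 < \<tau>" and "0 < t"
  shows "measure M {\<omega> \<in> space M. t < X \<omega>} \<le> (\<integral>\<omega>. X \<omega> powr \<tau> \<partial>M) / t powr \<tau>"
proof -
  have "{\<omega> \<in> space M. t < X \<omega>} \<subseteq> {\<omega> \<in> space M. t powr \<tau> \<le> X \<omega> powr \<tau>}"
    using assms by (auto intro: powr_mono2)
  then have "measure M {\<omega> \<in> space M. t < X \<omega>}
      \<le> measure M {\<omega> \<in> space M. t powr \<tau> \<le> X \<omega> powr \<tau>}"
    by (intro finite_measure_mono) auto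
  also have "\<dots> \<le> (\<integral>\<omega>. X \<omega> powr \<tau> \<partial>M) / t powr \<tau>"
    using assms by (intro integral_Markov_inequality_measure[where A = "space M"]) auto
  finally show ?thesis .
qed

definition anti_concentrated :: "'a measure \<Rightarrow> ('a \<Rightarrow> real) \<Rightarrow> real \<Rightarrow> real \<Rightarrow> bool" where
  "anti_concentrated M X C \<sigma> \<longleftrightarrow>
     (\<forall>I. I \<in> sets borel \<and> I \<subseteq> {0..} \<and> emeasure lborel I \<le> 1 \<longrightarrow>
        measure M {\<omega> \<in> space M. X \<omega> \<in> I} \<le> C * (measure lborel I) powr \<sigma>)"

lemma anti_concentrated_interval_length:
  fixes X :: "'a \<Rightarrow> real"
  assumes "anti_concentrated M X C \<sigma>" and "0 < \<sigma>" and "0 \<le> a" and "a \<le> b"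
    and "0 < p" and "p \<le> measure M {\<omega> \<in> space M. X \<omega> \<in> {a..b}}"
  shows "min 1 ((p / C) powr (1/\<sigma>)) \<le> b - a"
proof (cases "b - a \<le> 1")
  case True
  then have "emeasure lborel {a..b} \<le> 1" using assms(4) by (simp add: ennreal_leI)
  moreover have "{a..b} \<subseteq> {0..}" using assms(3) by auto
  ultimately have "measure M {\<omega> \<in> space M. X \<omega> \<in> {a..b}} \<le> C * measure lborel {a..b} powr \<sigma>"
    using assms(1)[unfolded anti_concentrated_def, rule_format, of "{a..b}"] by simp
  then have "measure M {\<omega> \<in> space M. X \<omega> \<in> {a..b}} \<le> C * (b - a) powr \<sigma>"
    using assms(4) by simp
  then have p_le: "p \<le> C * (b - a) powr \<sigma>" using assms(6) by linarith
  moreover have "C * (b - a) powr \<sigma> \<le> 0" if "C \<le> 0"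
    using that by (simp add: mult_nonpos_nonneg)
  ultimately have "0 < C" using \<open>0 < p\<close> by force
  then have "(p / C) powr (1/\<sigma>) \<le> ((b - a) powr \<sigma>) powr (1/\<sigma>)"
    using p_le \<open>0 < p\<close> \<open>0 < \<sigma>\<close> by (intro powr_mono2) (auto simp: field_simps)
  also have "\<dots> = b - a" using assms(2,4) by (simp add: powr_powr)
  finally show ?thesis by simp
next
  case False
  then show ?thesis by simp
qed

context prob_space
begin

lemma measure_between_levels:
  fixes X :: "'a \<Rightarrow> real"
  assumes [measurable]: "X \<in> borel_measurable M"
    and "measure M {\<omega> \<in> space M. X \<omega> < a} \<le> \<alpha>"
    and "measure M {\<omega> \<in> space M. b < X \<omega>} \<le> \<alpha>"
  shows "1 - 2 * \<alpha> \<le> measure M {\<omega> \<in> space M. X \<omega> \<in> {a..b}}"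
proof -
  let ?L = "{\<omega> \<in> space M. X \<omega> < a}" and ?R = "{\<omega> \<in> space M. b < X \<omega>}"
    and ?J = "{\<omega> \<in> space M. X \<omega> \<in> {a..b}}"
  have "space M = ?L \<union> ?R \<union> ?J" by auto
  then have "1 = measure M (?L \<union> ?R \<union> ?J)" using prob_space by simp
  also have "\<dots> \<le> measure M ?L + measure M ?R + measure M ?J"
    using measure_Un_le[of ?L M ?R] measure_Un_le[of "?L \<union> ?R" M ?J] by auto
  finally show ?thesis using assms(2,3) by linarith
qed

lemma integral_powr_pos:
  fixes X :: "'a \<Rightarrow> real"
  assumes "integrable M (\<lambda>\<omega>. X \<omega> powr \<tau>)" and "\<forall>\<omega>\<in>space M. 0 < X \<omega>"
  shows "0 < (\<integral>\<omega>. X \<omega> powr \<tau> \<partial>M)"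
proof -
  have nonneg: "AE \<omega> in M. 0 \<le> X \<omega> powr \<tau>" by simp
  have "\<not> (AE \<omega> in M. X \<omega> powr \<tau> = 0)"
  proof
    assume "AE \<omega> in M. X \<omega> powr \<tau> = 0"
    then have "AE \<omega> in M. False"
      by (rule AE_mp) (rule AE_I2, use assms(2) in force)
    then show False by simp
  qed
  then have "(\<integral>\<omega>. X \<omega> powr \<tau> \<partial>M) \<noteq> 0"
    using integral_nonneg_eq_0_iff_AE[OF assms(1) nonneg] by simp
  moreover have "0 \<le> (\<integral>\<omega>. X \<omega> powr \<tau> \<partial>M)" using integral_nonneg_AE[OF nonneg] .
  ultimately show ?thesis by linarith
qed

lemma level_gap:
  fixes X :: "'a \<Rightarrow> real"
  assumes [measurable]: "X \<in> borel_measurable M" and pos: "\<forall>\<omega>\<in>space M. 0 < X \<omega>"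
    and "anti_concentrated M X C \<sigma>" and "0 < \<sigma>" and "\<alpha> < 1/2"
    and lower: "measure M {\<omega> \<in> space M. X \<omega> < a} \<le> \<alpha>"
    and upper: "measure M {\<omega> \<in> space M. b < X \<omega>} \<le> \<alpha>"
  shows "min 1 (((1 - 2 * \<alpha>) / C) powr (1/\<sigma>)) \<le> b - a"
proof -
  define a' where "a' = max a 0"
  have "{\<omega> \<in> space M. X \<omega> < a'} = {\<omega> \<in> space M. X \<omega> < a}"
    using pos by (auto simp: a'_def)
  then have mass: "1 - 2 * \<alpha> \<le> measure M {\<omega> \<in> space M. X \<omega> \<in> {a'..b}}"
    using lower upper by (intro measure_between_levels) auto
  have "a' \<le> b"
  proof (rule ccontr)
    assume "\<not> a' \<le> b"
    then have "measure M {\<omega> \<in> space M. X \<omega> \<in> {a'..b}} = 0" by simp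
    then show False using mass \<open>\<alpha> < 1/2\<close> by linarith
  qed
  then have "min 1 (((1 - 2 * \<alpha>) / C) powr (1/\<sigma>)) \<le> b - a'"
    using assms(3,4,5) mass by (intro anti_concentrated_interval_length) (auto simp: a'_def)
  then show ?thesis by (simp add: a'_def)
qed

lemma xi_bounds:
  fixes X :: "'a \<Rightarrow> real"
  assumes [measurable]: "X \<in> borel_measurable M" and pos: "\<forall>\<omega>\<in>space M. 0 < X \<omega>"
    and "anti_concentrated M X C \<sigma>" and "0 < \<sigma>" and "0 < \<alpha>" and "\<alpha> < 1/2"
    and tail: "measure M {\<omega> \<in> space M. t < X \<omega>} \<le> \<alpha>"
  defines "m \<equiv> min 1 (((1 - 2 * \<alpha>) / C) powr (1/\<sigma>))"
  shows "0 \<le> xi_minus M X \<alpha>" and "xi_plus M X \<alpha> \<le> t"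
    and "m \<le> xi_plus M X \<alpha> - xi_minus M X \<alpha>"
proof -
  let ?A = "{\<xi>. measure M {\<omega> \<in> space M. X \<omega> < \<xi>} \<le> \<alpha>}"
    and ?B = "{\<xi>. measure M {\<omega> \<in> space M. \<xi> < X \<omega>} \<le> \<alpha>}"
  have gap: "m \<le> b - a" if "a \<in> ?A" and "b \<in> ?B" for a b
    using level_gap[OF assms(1-4,6)] that unfolding m_def by simp
  have "{\<omega> \<in> space M. X \<omega> < 0} = {}" using pos by force
  then have "0 \<in> ?A" using \<open>0 < \<alpha>\<close> by (simp del: Collect_empty_eq)
  have "t \<in> ?B" using tail by simp
  have "0 \<le> m" unfolding m_def by simp
  then have "bdd_above ?A" and "bdd_below ?B"
    using gap \<open>0 \<in> ?A\<close> \<open>t \<in> ?B\<close> by (fastforce intro: bdd_aboveI[of _ t] bdd_belowI[of _ 0])+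
  show "0 \<le> xi_minus M X \<alpha>"
    unfolding xi_minus_def using cSup_upper[OF \<open>0 \<in> ?A\<close> \<open>bdd_above ?A\<close>] .
  show "xi_plus M X \<alpha> \<le> t"
    unfolding xi_plus_def using cInf_lower[OF \<open>t \<in> ?B\<close> \<open>bdd_below ?B\<close>] by simp
  show "m \<le> xi_plus M X \<alpha> - xi_minus M X \<alpha>"
    unfolding xi_plus_def xi_minus_def
    using gap \<open>0 \<in> ?A\<close> \<open>t \<in> ?B\<close> by (intro gap_le_cInf_minus_cSup) auto
qed

end

theorem lemma3p8:
  fixes M :: "'a measure" and X :: "'a \<Rightarrow> real" and \<sigma> C \<tau> :: real
  assumes "prob_space M"
    and "X \<in> borel_measurable M"
    and "\<forall>\<omega>\<in>space M. X \<omega> > 0"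
    and "0 < \<sigma>" and "\<sigma> \<le> 1"
    and "\<forall>I. I \<in> sets borel \<and> I \<subseteq> {0..} \<and> emeasure lborel I \<le> 1 \<longrightarrow>
           measure M {\<omega> \<in> space M. X \<omega> \<in> I} \<le> C * (measure lborel I) powr \<sigma>"
    and "0 < \<tau>"
    and "integrable M (\<lambda>\<omega>. X \<omega> powr \<tau>)"
  shows "\<forall>\<alpha>. 0 < \<alpha> \<and> \<alpha> < 1/2 \<longrightarrow>
           rel_width M X \<alpha> \<ge>
             min 1 (((1 - 2*\<alpha>) / C) powr (1/\<sigma>)) *
             (\<alpha> / (\<integral>\<omega>. X \<omega> powr \<tau> \<partial>M)) powr (1/\<tau>)"
proof (intro allI impI)
  fix \<alpha> :: real
  assume \<alpha>: "0 < \<alpha> \<and> \<alpha> < 1/2"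
  interpret prob_space M by (rule assms(1))
  have anti: "anti_concentrated M X C \<sigma>" unfolding anti_concentrated_def using assms(6) .
  define E where "E = (\<integral>\<omega>. X \<omega> powr \<tau> \<partial>M)"
  define t where "t = (E / \<alpha>) powr (1/\<tau>)"
  have "0 < E" unfolding E_def using integral_powr_pos assms(3,8) by blast
  then have "0 < t" and "t powr \<tau> = E / \<alpha>"
    unfolding t_def using \<alpha> \<open>0 < \<tau>\<close> by (simp_all add: powr_powr)
  then have "measure M {\<omega> \<in> space M. t < X \<omega>} \<le> \<alpha>"
    using measure_upper_tail_le_moment[OF assms(2,8,7) \<open>0 < t\<close>] \<open>0 < E\<close> \<alpha>
    unfolding E_def by simp
  note xi = xi_bounds[OF assms(2,3) anti assms(4) _ _ this]
  have "min 1 (((1 - 2*\<alpha>) / C) powr (1/\<sigma>)) / t \<le> rel_width M X \<alpha>"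
    unfolding rel_width_def using xi \<alpha> \<open>0 < t\<close> by (intro relative_gap_lower_bound) auto
  moreover have "(\<alpha> / E) powr (1/\<tau>) = 1 / t"
    unfolding t_def using \<alpha> \<open>0 < E\<close> by (simp add: powr_divide)
  ultimately show "min 1 (((1 - 2*\<alpha>) / C) powr (1/\<sigma>)) * (\<alpha> / E) powr (1/\<tau>) \<le> rel_width M X \<alpha>"
    by simp
qed

end
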